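(* Let $p$ be a prime and $n,k$ positive integers with $(p,k-1)=1$ and $n=\mathrm{ind}_p(k)$; let $G=G(p,n,k)=\langle a,b;\ a^p=1,\ b^n=1,\ b^{-1}ab=a^k\rangle$. Then $\mathrm{P}(G)$ and $\Lambda(G)$ are complete, i.e. $\Sigma_G(R)$ and $\Sigma_G(L)$ are complete, where $R=\{k^j-1\bmod p:j\in\mathbb{Z}_n\}$ and $L=\{1-k^j\bmod p: j\in\mathbb{Z}_n\}$.
   Context: $\mathrm{ind}_p(k)$ is the least positive integer $d$ with $k^d\equiv 1\pmod p$. Elements of $G$ are written uniquely as $a^ib^j$; $k_t=k^t-1\pmod p$. Commutators are $[x,y]=x^{-1}y^{-1}xy$; $(x)\rho(g)=[x,g]$, $(x)\lambda(g)=[g,x]$; maps are written on the right and composed left to right. $\mathrm{P}(G)$, $\Lambda(G)$ are the semigroups generated by all $\rho(g)$, resp. all $\lambda(g)$; they equal $\Sigma_G(R)$ and $\Sigma_G(L)$. For $x,y\in\mathbb{Z}_p$, $(a^ib^j)\mu(x,y)=a^{xik^j-yk_j}$, $C(x,y)=\{\mu(x,yz):z\in\mathbb{Z}_p\}$. $S^*$ is the multiplicative subsemigroup of $\mathbb{Z}_p$ generated by $S$; $\Sigma_G(S)$ is the semigroup generated by $\{\mu(s,z):s\in S,z\in\mathbb{Z}_p\}$. For $x\in S^*$, $Y(x)=\{s^*z: s^*\in S^*, z\in\mathbb{Z}_p, \exists s\in S,\ x\equiv ss^*\}$; the $x$-family $\{C(x,y):y\in Y(x)\}$ is complete if it contains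 $C(x,1)$, and $\Sigma_G(S)$ is complete if all $x$-families ($x\in S^*$) are complete. *)

theory Defs
  imports "HOL-Number_Theory.Number_Theory" "HOL-Library.FuncSet"
begin

text \<open>Every element is
  uniquely a^i b^j with i in Z_p, j in Z_n; we represent a^i b^j by the pair (i,j).
  Z_p is represented by the integers {0..<p} (arithmetic reduced mod p).\<close>

definition G_carrier :: "nat \<Rightarrow> nat \<Rightarrow> (int \<times> nat) set" where
  "G_carrier p n = {0..<int p} \<times> {0..<n}"

text \<open>(a^i b^j) mu(x,y) = a^(x i k^j - y k_j), with k_j = k^j - 1 (mod p).\<close>
definition mu :: "nat \<Rightarrow> nat \<Rightarrow> nat \<Rightarrow> int \<Rightarrow> int \<Rightarrow> (int \<times> nat \<Rightarrow> int \<times> nat)" where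
  "mu p n k x y = restrict
     (\<lambda>(i, j). ((x * i * int k ^ j - y * (int k ^ j - 1)) mod int p, 0::nat))
     (G_carrier p n)"

definition Cset :: "nat \<Rightarrow> nat \<Rightarrow> nat \<Rightarrow> int \<Rightarrow> int \<Rightarrow> (int \<times> nat \<Rightarrow> int \<times> nat) set" where
  "Cset p n k x y = {mu p n k x ((y * z) mod int p) | z. z \<in> {0..<int p}}"

inductive_set semigroup_gen :: "nat \<Rightarrow> int set \<Rightarrow> int set" for p S where
  gen: "s \<in> S \<Longrightarrow> s \<in> semigroup_gen p S"
| mult: "u \<in> semigroup_gen p S \<Longrightarrow> v \<in> semigroup_gen p S \<Longrightarrow> (u * v) mod int p \<in> semigroup_gen p S"

definition Yset :: "nat \<Rightarrow> int set \<Rightarrow> int \<Rightarrow> int set" where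
  "Yset p S x = {(t * z) mod int p | t z. t \<in> semigroup_gen p S \<and> z \<in> {0..<int p}
                   \<and> (\<exists>s\<in>S. [x = s * t] (mod int p))}"

definition family_complete :: "nat \<Rightarrow> nat \<Rightarrow> nat \<Rightarrow> int set \<Rightarrow> int \<Rightarrow> bool" where
  "family_complete p n k S x \<longleftrightarrow> Cset p n k x 1 \<in> {Cset p n k x y | y. y \<in> Yset p S x}"

definition Sigma_complete :: "nat \<Rightarrow> nat \<Rightarrow> nat \<Rightarrow> int set \<Rightarrow> bool" where
  "Sigma_complete p n k S \<longleftrightarrow> (\<forall>x \<in> semigroup_gen p S. family_complete p n k S x)"

definition Rset :: "nat \<Rightarrow> nat \<Rightarrow> nat \<Rightarrow> int set" where
  "Rset p n k = {(int k ^ j - 1) mod int p | j. j < n}"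

definition Lset :: "nat \<Rightarrow> nat \<Rightarrow> nat \<Rightarrow> int set" where
  "Lset p n k = {(1 - int k ^ j) mod int p | j. j < n}"

end

theory Submission
  imports Defs
begin

text \<open>Sigma_G(S) is complete as soon as 0 \<in> S and 1 \<in> S*.  Then every x \<in> S* factors as
  x = s t (mod p) with s \<in> S and t \<in> S* (for x \<in> S take t = 1).  If x = 0 (mod p), the
  factorisation x = 0 * 1 puts 1 into Y(x).  Otherwise t is a unit mod p, so z \<mapsto> t z permutes
  Z_p and C(x,t) = C(x,1) with t \<in> Y(x).  For R and L, j = 0 gives 0 \<in> S and j = 1 gives
  \<plusminus>(k - 1), a unit because (p, k - 1) = 1; by Fermat a power of it is 1, so 1 \<in> S*.  The
  index j = 1 exists because k = 1 (mod p) would force p | k - 1, hence n = ind_p(k) > 1.\<close>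

lemma image_mult_mod_atLeastLessThan:
  fixes a m :: int
  assumes "coprime a m"
  shows "(\<lambda>z. a * z mod m) ` {0..<m} = {0..<m}"
proof (cases "m > 0")
  case True
  then have "{0..<m} = insert 0 {1..<m}" by auto
  moreover have "(\<lambda>z. a * z mod m) ` {1..<m} = {1..<m}"
    using bij_betw_int_remainders_mult[OF assms] by (rule bij_betw_imp_surj_on)
  ultimately show ?thesis by simp
qed simp

lemma Cset_eq_Cset_1:
  assumes "coprime y (int p)"
  shows "Cset p n k x y = Cset p n k x 1"
proof -
  have "Cset p n k x c = mu p n k x ` ((\<lambda>z. c * z mod int p) ` {0..<int p})" for c
    unfolding Cset_def by auto
  then show ?thesis
    using image_mult_mod_atLeastLessThan[OF assms] image_mult_mod_atLeastLessThan[of 1 "int p"]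
    by simp
qed

lemma semigroup_gen_factor:
  assumes "x \<in> semigroup_gen p S" and "1 \<in> semigroup_gen p S"
  shows "\<exists>s\<in>S. \<exists>t\<in>semigroup_gen p S. [x = s * t] (mod int p)"
  using assms(1)
proof (induction rule: semigroup_gen.induct)
  case (gen s)
  then show ?case using assms(2) by force
next
  case (mult u v)
  then obtain s t where st: "s \<in> S" "t \<in> semigroup_gen p S" "[u = s * t] (mod int p)"
    by blast
  have "[(u * v) mod int p = s * ((t * v) mod int p)] (mod int p)"
  proof -
    have "[(u * v) mod int p = (s * t) * v] (mod int p)"
      using st(3) by (simp add: cong_mult)
    also have "[(s * t) * v = s * ((t * v) mod int p)] (mod int p)"
      by (simp add: cong_def mod_mult_right_eq mult.assoc)
    finally show ?thesis .
  qed
  moreover have "(t * v) mod int p \<in> semigroup_gen p S"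
    using st(2) mult.hyps(2) by (rule semigroup_gen.mult)
  ultimately show ?case using st(1) by blast
qed

lemma Sigma_complete_if_zero_one:
  assumes "prime p" and "0 \<in> S" and "1 \<in> semigroup_gen p S"
  shows "Sigma_complete p n k S"
  unfolding Sigma_complete_def family_complete_def
proof (intro ballI)
  fix x assume x: "x \<in> semigroup_gen p S"
  have p1: "int p > 1" using assms(1) prime_gt_1_nat by simp
  show "Cset p n k x 1 \<in> {Cset p n k x y |y. y \<in> Yset p S x}"
  proof (cases "[x = 0] (mod int p)")
    case True
    then have "(1 * 1) mod int p \<in> Yset p S x"
      unfolding Yset_def using assms(2,3) p1 by (intro CollectI exI[of _ 1]) auto
    then show ?thesis using p1 by auto
  next
    case False
    obtain s t where st: "s \<in> S" "t \<in> semigroup_gen p S" "[x = s * t] (mod int p)"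
      using semigroup_gen_factor[OF x assms(3)] by blast
    have "\<not> int p dvd t"
    proof
      assume "int p dvd t"
      then have "[s * t = 0] (mod int p)" by (simp add: cong_0_iff)
      with st(3) have "[x = 0] (mod int p)" by (rule cong_trans)
      with False show False ..
    qed
    then have "coprime (int p) t"
      using assms(1) by (simp add: prime_imp_coprime)
    then have "coprime ((t * 1) mod int p) (int p)"
      using p1 by (simp add: coprime_commute)
    then have "Cset p n k x ((t * 1) mod int p) = Cset p n k x 1" by (rule Cset_eq_Cset_1)
    moreover have "(t * 1) mod int p \<in> Yset p S x"
      unfolding Yset_def using st p1 by (intro CollectI exI[of _ t] exI[of _ 1]) auto
    ultimately show ?thesis by blast
  qed
qed

lemma fermat_theorem_int:
  fixes r :: int
  assumes "prime p" and "\<not> int p dvd r"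
  shows "[r ^ (p - 1) = 1] (mod int p)"
proof -
  have p0: "int p > 0" using assms(1) prime_gt_0_nat by simp
  define r' where "r' = nat (r mod int p)"
  have r': "int r' = r mod int p" unfolding r'_def using p0 by simp
  have "\<not> p dvd r'"
  proof
    assume "p dvd r'"
    then have "int p dvd r mod int p" by (simp flip: r')
    then show False using assms(2) by (simp add: dvd_mod_iff)
  qed
  then have "[r' ^ (p - 1) = 1] (mod p)" by (rule fermat_theorem[OF assms(1)])
  then have "[(r mod int p) ^ (p - 1) = 1] (mod int p)"
    using r' by (metis cong_int_iff of_nat_1 of_nat_power)
  then show ?thesis by (simp add: cong_def power_mod)
qed

lemma power_mod_in_semigroup_gen:
  assumes "r \<in> S" and "r \<in> {0..<int p}"
  shows "r ^ Suc m mod int p \<in> semigroup_gen p S"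
proof (induction m)
  case 0
  then show ?case using assms by (simp add: semigroup_gen.gen)
next
  case (Suc m)
  have "(r ^ Suc m mod int p * r) mod int p \<in> semigroup_gen p S"
    using Suc semigroup_gen.gen[OF assms(1)] by (rule semigroup_gen.mult)
  also have "(r ^ Suc m mod int p * r) mod int p = r ^ Suc (Suc m) mod int p"
    by (metis mod_mult_left_eq mult.commute power_Suc)
  finally show ?case .
qed

lemma one_in_semigroup_gen:
  assumes "prime p" and "r \<in> S" and "r \<in> {0..<int p}" and "\<not> int p dvd r"
  shows "1 \<in> semigroup_gen p S"
proof -
  have p2: "p \<ge> 2" using assms(1) prime_ge_2_nat by blast
  have "r ^ Suc (p - 2) mod int p = 1"
    using fermat_theorem_int[OF assms(1,4)] p2 by (simp add: cong_def Suc_diff_Suc numeral_2_eq_2)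
  then show ?thesis using power_mod_in_semigroup_gen[OF assms(2,3)] by metis
qed

lemma Sigma_complete_if_zero_unit:
  assumes "prime p" and "0 \<in> S" and "r \<in> S" and "r \<in> {0..<int p}" and "\<not> int p dvd r"
  shows "Sigma_complete p n k S"
  using assms(1,2) one_in_semigroup_gen[OF assms(1,3-5)] by (rule Sigma_complete_if_zero_one)

lemma ord_neq_1_if_coprime_pred:
  fixes p k :: nat
  assumes "p \<noteq> 1" and "coprime p (k - 1)"
  shows "ord p k \<noteq> 1"
proof
  assume "ord p k = 1"
  then have cong: "[k = 1] (mod p)" using ord_eq_Suc_0_iff by simp
  have "p dvd k - 1"
  proof (cases "k = 0")
    case False
    then show ?thesis using cong cong_altdef_nat by simp
  qed simp
  then show False using assms by (simp add: coprime_absorb_left)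
qed

lemma not_dvd_pred_if_coprime:
  fixes p k :: nat
  assumes "p \<noteq> 1" and "k > 0" and "coprime p (k - 1)"
  shows "\<not> int p dvd (int k - 1)"
proof
  assume "int p dvd (int k - 1)"
  also have "int k - 1 = int (k - 1)" using assms(2) by simp
  finally have "p dvd k - 1" by (simp only: int_dvd_int_iff)
  then show False using assms(1,3) by (simp add: coprime_absorb_left)
qed

theorem corollary6p2:
  fixes p n k :: nat
  assumes "prime p" and "n > 0" and "k > 0"
    and "coprime p (k - 1)"
    and "n = ord p k"
  shows "Sigma_complete p n k (Rset p n k) \<and> Sigma_complete p n k (Lset p n k)"
proof
  have p1: "p > 1" using assms(1) prime_gt_1_nat by blast
  have "n \<noteq> 1" using ord_neq_1_if_coprime_pred[of p k] assms(4,5) p1 by simp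
  then have n1: "1 < n" using assms(2) by simp
  have unit: "\<not> int p dvd (int k - 1)" using not_dvd_pred_if_coprime[of p k] assms(3,4) p1 by simp
  show "Sigma_complete p n k (Rset p n k)"
  proof (rule Sigma_complete_if_zero_unit[where r = "(int k - 1) mod int p"])
    show "0 \<in> Rset p n k"
      unfolding Rset_def using assms(2) by (auto intro!: exI[of _ 0])
    show "(int k - 1) mod int p \<in> Rset p n k"
      unfolding Rset_def using n1 by (auto intro!: exI[of _ 1])
  qed (use assms(1) unit p1 in \<open>simp_all add: dvd_mod_iff\<close>)
  show "Sigma_complete p n k (Lset p n k)"
  proof (rule Sigma_complete_if_zero_unit[where r = "(1 - int k) mod int p"])
    show "0 \<in> Lset p n k"
      unfolding Lset_def using assms(2) by (auto intro!: exI[of _ 0])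
    show "(1 - int k) mod int p \<in> Lset p n k"
      unfolding Lset_def using n1 by (auto intro!: exI[of _ 1])
  qed (use assms(1) unit p1 in \<open>simp_all add: dvd_mod_iff dvd_diff_commute\<close>)
qed

end
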